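(* Let $u=s_{i_1}\cdots s_{i_l}$ and $v=s_{j_1}\cdots s_{j_m}$ be reduced words for glides in $\hat S_n$ with offsets $k_1,k_2$, with $vu$ reduced, and let $\tilde v=\rho^{-k_2}(v)$ (with reduced word $s_{j_1-k_2}\cdots s_{j_m-k_2}$). Let $\Gamma$ be the (lifted, wire-labelled) wiring diagram of the bi-infinite word $\cdots\rho^{2k_1}(u)\rho^{k_1}(u)\,u\,\rho^{-k_1}(u)\cdots$, in which the $j$-th crossing of the copy $\rho^{-ik_1}(u)$ is called vertex $(j,i)$, and let $\Gamma'$ be the diagram obtained after $m\ge0$ steps of the time evolution, in which the $j$-th crossing of the $i$-th copy of a rotation of $u$ is again called vertex $(j,i)$. Then for every $i\in\mathbb Z$ there is an isomorphism of the (unweighted) cylindric wiring diagrams $\Gamma\to\Gamma'$ sending vertex $(j,i_0)$ to vertex $(j,i_0+i)$ for all $j,i_0$, and if a chamber of $\Gamma$ has label $\mathbf s$ then the corresponding chamber of $\Gamma'$ has label $$\mathbf s'=\mathbf s+i\,t(u)-m\,t(\tilde v)$$ (as elements of $\mathbb Z^n/\mathbb Z(1,\dots,1)$).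
   Context: $\hat S_n$: generators $s_0,\dots,s_{n-1}$ (indices mod $n$), relations $s_i^2=1$, $s_is_js_i=s_js_is_j$ if $i-j\equiv\pm1$, $s_is_j=s_js_i$ if $i-j\not\equiv0,\pm1$. $\rho$ is the automorphism $s_i\mapsto s_{i+1}$; $\phi:\hat S_n\to S_n$, $s_i\mapsto(i\ i+1)$, $s_0\mapsto(1\ n)$; a glide of offset $k\in\{0,\dots,n-1\}$ is $g$ with $\phi(g)(j)\equiv j+k\pmod n$; for glides $u,v$ of offsets $k_1,k_2$, $vu=\rho^{k_2}(u)\rho^{-k_1}(v)$. Wiring diagrams: a word is drawn left to right on a cylinder with wires in positions $1,\dots,n$ (mod $n$), $s_i$ crossing positions $i,i+1$. Universal cover: positions become integers (position $p$ lying over $p \bmod n$), each crossing $s_i$ lifting to crossings of positions $p,p+1$ for all $p\equiv i$; lifted wires are labelled by integers according to their positions at a fixed vertical line, and these labels are carried along unchanged by braid and commutation moves. A chamber is a connected region of the complement of the lifted wires; if $S\subseteq\mathbb Z$ is the set of labels of wires passing below it, its label is $[S]=(\mathbf s_1,\dots,\mathbf s_n)$ with $\mathbf s_i=\lceil \max\{b\in S:b\equiv i\bmod n\}/n\rceil$. Trajectory: for a glide $g$ with a reduced word, draw the diagram of the word with lifted wires labelled by their starting positions (left end); $t(g)$ is the label of the chamber directly above the wire labelled $1$ at the right end minus the label of the chamber directly above wire $1$ at the left end, an element of $\mathbb Z^n/\mathbb Z(1,\dots,1)$. Time evolution: starting from $\Gamma$, one time step inserts a rotation $\rho^{Ik_1}(v)$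 immediately to the left of the copy $\rho^{Ik_1}(u)$ far to the left and pushes it to the right through all copies using $\rho^{ik_1}(v)\rho^{ik_1}(u)=\rho^{ik_1+k_2}(u)\rho^{(i-1)k_1}(v)$ (realized by braid and commutation moves); the result is the bi-infinite word in which the $i$-th copy is $\rho^{-ik_1+k_2}(u)$. After $m$ steps the $i$-th copy is $\rho^{-ik_1+mk_2}(u)$. *)

theory Defs
  imports Complex_Main
begin

text \<open>Letters of words are integers in 0..n-1 (the index of s_i, read mod n).
  The generator s_i acts on the integers (the positions of the universal cover of
  the cylinder) by swapping p and p+1 for every p congruent to i mod n.\<close>

definition sw :: "nat \<Rightarrow> int \<Rightarrow> int \<Rightarrow> int" where
  "sw n i p = (if p mod int n = i mod int n then p + 1
               else if p mod int n = (i + 1) mod int n then p - 1 else p)"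

definition aff :: "nat \<Rightarrow> int list \<Rightarrow> int \<Rightarrow> int" where
  "aff n w = foldr (\<lambda>i f. sw n i \<circ> f) w id"

definition is_word :: "nat \<Rightarrow> int list \<Rightarrow> bool" where
  "is_word n w \<longleftrightarrow> set w \<subseteq> {0..<int n}"

definition reduced :: "nat \<Rightarrow> int list \<Rightarrow> bool" where
  "reduced n w \<longleftrightarrow> is_word n w \<and>
     (\<forall>w'. is_word n w' \<longrightarrow> aff n w' = aff n w \<longrightarrow> length w \<le> length w')"

definition glide :: "nat \<Rightarrow> int list \<Rightarrow> nat \<Rightarrow> bool" where
  "glide n w k \<longleftrightarrow> k < n \<and> (\<forall>j\<in>{1..int n}. aff n w j mod int n = (j + int k) mod int n)"

definition rot :: "nat \<Rightarrow> int \<Rightarrow> int list \<Rightarrow> int list" where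
  "rot n k w = map (\<lambda>i. (i + k) mod int n) w"

text \<open>A labelled bi-infinite diagram is a pair (cp, lam): cp c is the word of the
  c-th block (blocks are read left to right in increasing c), and lam is the wire
  labelling at the vertical line immediately to the left of block 0
  (lam p = label of the lifted wire at position p there).
  A labelling (position \<mapsto> label) before a word w becomes L \<circ> aff n w after it.\<close>
type_synonym diagram = "(int \<Rightarrow> int list) \<times> (int \<Rightarrow> int)"

definition seg :: "(int \<Rightarrow> int list) \<Rightarrow> int \<Rightarrow> int \<Rightarrow> int list" where
  "seg cp a b = concat (map cp [a..b - 1])"

definition line_lab :: "nat \<Rightarrow> diagram \<Rightarrow> int \<Rightarrow> int \<Rightarrow> int" where
  "line_lab n D c = (if 0 \<le> c then snd D \<circ> aff n (seg (fst D) 0 c)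
                     else snd D \<circ> aff n (rev (seg (fst D) c 0)))"

text \<open>Wire labelling at the vertical line just before the j-th letter (0-based) of block c;
  j = length of the block gives the line just after block c.\<close>
definition slot_lab :: "nat \<Rightarrow> diagram \<Rightarrow> int \<Rightarrow> nat \<Rightarrow> int \<Rightarrow> int" where
  "slot_lab n D c j = line_lab n D c \<circ> aff n (take j (fst D c))"

text \<open>Label of the chamber lying between positions p and p+1 at a vertical line whose
  wire labelling is L: the wires below it are those at positions \<le> p, and the label is
  (s_1,...,s_n) with s_i = ceiling(max{b in S : b = i mod n} / n).
  Represented as a function on indices, meaningful on 1..n.\<close>
definition chamber_label :: "nat \<Rightarrow> (int \<Rightarrow> int) \<Rightarrow> int \<Rightarrow> int \<Rightarrow> int" where
  "chamber_label n L p = (\<lambda>i. \<lceil>real_of_int (GREATEST b. b \<in> L ` {..p} \<and> b mod int n = i mod int n)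
                                 / real n\<rceil>)"

definition modeq :: "nat \<Rightarrow> (int \<Rightarrow> int) \<Rightarrow> (int \<Rightarrow> int) \<Rightarrow> bool" where
  "modeq n s t \<longleftrightarrow> (\<exists>c. \<forall>i\<in>{1..int n}. s i = t i + c)"

text \<open>Trajectory of (the glide given by) a reduced word w: wires labelled by starting
  positions; label of the chamber directly above wire 1 at the right end minus that at
  the left end (a representative in Z^n).\<close>
definition traj :: "nat \<Rightarrow> int list \<Rightarrow> int \<Rightarrow> int" where
  "traj n w = (\<lambda>i. chamber_label n (aff n w) (THE p. aff n w p = 1) i - chamber_label n id 1 i)"

text \<open>Gamma: blocks ... rho^{2k1}(u) rho^{k1}(u) u rho^{-k1}(u) ..., block c = rho^{-c k1}(u),
  wires labelled by their positions at the line immediately left of block 0.\<close>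
definition Gamma :: "nat \<Rightarrow> int list \<Rightarrow> nat \<Rightarrow> diagram" where
  "Gamma n u k1 = (\<lambda>c. rot n (- c * int k1) u, id)"

text \<open>One step of the time evolution (the (s+1)-st step, s = 0,1,...).  A rotated copy of v
  is inserted far to the left and pushed to the right through all blocks by braid and
  commutation moves, each block being rotated by rho^{k2}.  Labels are carried along by
  the moves, so wires to the right of the travelling copy of v keep their labels.  When
  the travelling copy (which is then rho^{s k2}(v)) sits immediately left of block 0, the
  line to its right carries the old labelling at the line left of block 0; after it has
  passed block 0, the line immediately left of the new block 0 is the line that was to
  its left, whose labelling is obtained by transporting back through rho^{s k2}(v).\<close>
definition time_step :: "nat \<Rightarrow> int list \<Rightarrow> nat \<Rightarrow> nat \<Rightarrow> diagram \<Rightarrow> diagram" where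
  "time_step n v k2 s D =
     (\<lambda>c. rot n (int k2) (fst D c), snd D \<circ> aff n (rev (rot n (int s * int k2) v)))"

fun evolve :: "nat \<Rightarrow> int list \<Rightarrow> nat \<Rightarrow> nat \<Rightarrow> diagram \<Rightarrow> diagram" where
  "evolve n v k2 0 D = D"
| "evolve n v k2 (Suc s) D = time_step n v k2 s (evolve n v k2 s D)"

text \<open>The map of cylindric wiring diagrams shifting blocks by h (vertex (j,c) \<mapsto> (j,c+h))
  and rotating the cylinder by r is an isomorphism D \<rightarrow> D'.\<close>
definition cyl_iso :: "nat \<Rightarrow> diagram \<Rightarrow> diagram \<Rightarrow> int \<Rightarrow> int \<Rightarrow> bool" where
  "cyl_iso n D D' h r \<longleftrightarrow>
     (\<forall>c. length (fst D' (c + h)) = length (fst D c) \<and>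
          (\<forall>j < length (fst D c). fst D' (c + h) ! j = (fst D c ! j + r) mod int n))"

end

theory Submission
  imports Defs
begin

text \<open>
  A glide \<open>w\<close> of offset \<open>k\<close> satisfies \<open>w(q - k) = q + n \<delta>\<^sub>w(q)\<close>, where the
  displacement \<open>\<delta>\<^sub>w\<close> depends only on \<open>q mod n\<close> and agrees with the trajectory \<open>t(w)\<close> up to
  an additive constant. The blocks of \<open>\<Gamma>\<close> are the rotations \<open>\<rho>^(-c k\<^sub>1)(u)\<close>, so passing
  through a block shifts positions by \<open>k\<^sub>1\<close> and adds \<open>n \<delta>\<^sub>u\<close>; hence the wire labelling
  along block \<open>c\<close> is \<open>y + n c \<delta>\<^sub>u(y)\<close>, with \<open>y\<close> a position inside a single copy of \<open>u\<close>.
  A step of the time evolution rotates every block by \<open>k\<^sub>2\<close> and pulls the reference labelling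
  back through a copy of \<open>v\<close>, which subtracts \<open>n \<delta>\<^sub>v\<^sub>'\<close> for \<open>v' = \<rho>^(-k\<^sub>2)(v)\<close>.
  So along block \<open>c + i\<close> of \<open>\<Gamma>'\<close>, at positions shifted by \<open>r = m k\<^sub>2 - i k\<^sub>1\<close>, the
  labelling is \<open>L + n \<phi>(L)\<close>, where \<open>L\<close> is the labelling of \<open>\<Gamma>\<close> along block \<open>c\<close> and
  \<open>\<phi> = i \<delta>\<^sub>u - m \<delta>\<^sub>v\<^sub>'\<close>. Relabelling wires by \<open>y \<mapsto> y + n \<phi>(y)\<close> preserves residues
  mod \<open>n\<close> and translates each residue class by a constant, so it adds \<open>\<phi>\<close> to every chamber
  label.
\<close>

section \<open>Affine permutations and glides\<close>

lemma sw_add_mult: "sw n i (p + int n * t) = sw n i p + int n * t"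
  unfolding sw_def by simp

lemma sw_sw:
  assumes "n \<ge> 2"
  shows "sw n i (sw n i p) = p"
proof -
  have "\<not> int n dvd 1" using assms by (simp add: zdvd_not_zless)
  then have "(p + 1) mod int n \<noteq> p mod int n" by (metis add_diff_cancel_left' mod_eq_dvd_iff)
  then show ?thesis
    unfolding sw_def by (auto simp: mod_eq_dvd_iff algebra_simps)
qed

lemma sw_rot: "sw n ((i + k) mod int n) p = sw n i (p - k) + k"
proof -
  have "(p mod int n = (i + k) mod int n) = ((p - k) mod int n = i mod int n)"
    and "(p mod int n = (i + k + 1) mod int n) = ((p - k) mod int n = (i + 1) mod int n)"
    by (simp_all add: mod_eq_dvd_iff algebra_simps)
  moreover have "((i + k) mod int n + 1) mod int n = (i + k + 1) mod int n"
    by (simp add: mod_add_left_eq)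
  ultimately show ?thesis
    unfolding sw_def by auto
qed

lemma aff_Nil [simp]: "aff n [] = id"
  unfolding aff_def by simp

lemma aff_Cons [simp]: "aff n (a # w) = sw n a \<circ> aff n w"
  unfolding aff_def by simp

lemma aff_append: "aff n (w @ w') = aff n w \<circ> aff n w'"
  by (induction w) auto

lemma aff_add_mult: "aff n w (p + int n * t) = aff n w p + int n * t"
  by (induction w arbitrary: p) (auto simp: sw_add_mult)

lemma aff_aff_rev: "n \<ge> 2 \<Longrightarrow> aff n w (aff n (rev w) p) = p"
  by (induction w arbitrary: p) (auto simp: aff_append sw_sw)

lemma aff_rev_aff: "n \<ge> 2 \<Longrightarrow> aff n (rev w) (aff n w p) = p"
  by (induction w arbitrary: p) (auto simp: aff_append sw_sw)

lemma surj_aff: "n \<ge> 2 \<Longrightarrow> surj (aff n w)"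
  by (metis aff_aff_rev surjI)

lemma aff_rot: "aff n (rot n k w) p = aff n w (p - k) + k"
  by (induction w arbitrary: p) (auto simp: rot_def sw_rot)

lemma rot_rot: "rot n b (rot n a w) = rot n (a + b) w"
  unfolding rot_def by (simp add: mod_add_left_eq add.assoc)

definition periodic :: "nat \<Rightarrow> (int \<Rightarrow> int) \<Rightarrow> bool" where
  "periodic n \<phi> \<longleftrightarrow> (\<forall>q t. \<phi> (q + int n * t) = \<phi> q)"

lemma periodicD: "periodic n \<phi> \<Longrightarrow> \<phi> (q + int n * t) = \<phi> q"
  unfolding periodic_def by blast

lemma periodic_cong: "periodic n \<phi> \<Longrightarrow> q mod int n = x mod int n \<Longrightarrow> \<phi> q = \<phi> x"
  unfolding periodic_def by (metis mod_eq_dvd_iff dvdE diff_add_cancel add.commute)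

lemma glide_aff_mod:
  assumes "glide n w k"
  shows "aff n w q mod int n = (q + int k) mod int n"
proof -
  have n: "n > 0" using assms unfolding glide_def by simp
  define j where "j = (q - 1) mod int n + 1"
  define t where "t = (q - 1) div int n"
  have q: "q = j + int n * t" and qk: "q + int k = (j + int k) + int n * t"
    unfolding j_def t_def by simp_all
  have "0 \<le> (q - 1) mod int n" "(q - 1) mod int n < int n" using n by simp_all
  then have "j \<in> {1..int n}" unfolding j_def by simp
  then have "aff n w j mod int n = (j + int k) mod int n" using assms unfolding glide_def by blast
  then show ?thesis
    unfolding qk by (subst q) (simp add: aff_add_mult)
qed

lemma glide_rot:
  assumes "glide n w k"
  shows "glide n (rot n a w) k"
proof -
  have "aff n (rot n a w) j mod int n = (j + int k) mod int n" for j
    using glide_aff_mod[OF assms, of "j - a"] by (simp add: aff_rot mod_eq_dvd_iff algebra_simps)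
  then show ?thesis using assms unfolding glide_def by blast
qed

definition displacement :: "nat \<Rightarrow> int list \<Rightarrow> nat \<Rightarrow> int \<Rightarrow> int" where
  "displacement n w k q = (aff n w (q - int k) - q) div int n"

lemma periodic_displacement: "periodic n (displacement n w k)"
proof -
  have "aff n w (q + int n * t - int k) = aff n w (q - int k) + int n * t" for q t
    using aff_add_mult[of n w "q - int k" t] by (simp add: algebra_simps)
  then show ?thesis unfolding periodic_def displacement_def by simp
qed

lemma aff_glide_displacement:
  assumes "glide n w k"
  shows "aff n w (q - int k) = q + int n * displacement n w k q"
proof -
  have "int n dvd aff n w (q - int k) - q"
    using glide_aff_mod[OF assms, of "q - int k"] by (simp add: mod_eq_dvd_iff)
  then show ?thesis unfolding displacement_def by simp
qed

lemma aff_glide_displacement_rot: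
  assumes "glide n w k"
  shows "aff n w q = q + int k + int n * displacement n (rot n (- int k) w) k q"
proof -
  have "aff n (rot n (- int k) w) (q - int k) = q + int n * displacement n (rot n (- int k) w) k q"
    by (rule aff_glide_displacement[OF glide_rot[OF assms]])
  then show ?thesis by (simp add: aff_rot)
qed

section \<open>Chamber labels\<close>

lemma int_set_has_greatest:
  fixes S :: "int set"
  assumes "b \<in> S" and "\<forall>y\<in>S. y \<le> B"
  shows "\<exists>g\<in>S. \<forall>y\<in>S. y \<le> g"
proof -
  have fin: "finite (S \<inter> {b..B})" by simp
  have "b \<in> S \<inter> {b..B}" using assms by auto
  then have "Max (S \<inter> {b..B}) \<in> S" "b \<le> Max (S \<inter> {b..B})"
    using Max_in[OF fin] Max_ge[OF fin] by blast+
  moreover have "y \<le> Max (S \<inter> {b..B})" if "y \<in> S" "b \<le> y" for y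
    using that assms(2) Max_ge[OF fin] by auto
  ultimately show ?thesis by (meson linear order_trans)
qed

lemma greatest_in_residue_class_exists:
  assumes n: "n > 0" and L: "\<And>q t. L (q + int n * t) = L q + int n * t" and "surj L"
  shows "\<exists>g\<in>L ` {..p}. g mod int n = x mod int n \<and>
           (\<forall>y\<in>L ` {..p}. y mod int n = x mod int n \<longrightarrow> y \<le> g)"
proof -
  define K where "K = Max ((\<lambda>r. L r - r) ` {0..<int n})"
  have bound: "L q \<le> q + K" for q
  proof -
    have "L q = L (q mod int n) + int n * (q div int n)"
      using L[of "q mod int n" "q div int n"] by simp
    moreover have "q = q mod int n + int n * (q div int n)" by simp
    ultimately have "L q - q = L (q mod int n) - q mod int n" by linarith
    moreover have "L (q mod int n) - q mod int n \<le> K"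
      unfolding K_def using n by (intro Max_ge) auto
    ultimately show ?thesis by linarith
  qed
  define S where "S = {y \<in> L ` {..p}. y mod int n = x mod int n}"
  obtain q0 where q0: "L q0 = x" using \<open>surj L\<close> by (metis surjD)
  define q1 where "q1 = q0 - int n * \<bar>q0 - p\<bar>"
  have "int n * \<bar>q0 - p\<bar> \<ge> \<bar>q0 - p\<bar>" using n by (simp add: mult_le_cancel_right1)
  then have "L q1 \<in> L ` {..p}" unfolding q1_def by simp
  moreover have "L q1 mod int n = x mod int n"
    using L[of q0 "- \<bar>q0 - p\<bar>"] q0 unfolding q1_def by (simp add: mod_eq_dvd_iff)
  ultimately have "L q1 \<in> S" unfolding S_def by blast
  moreover have "\<forall>y\<in>S. y \<le> p + K"
    unfolding S_def using bound by (fastforce intro: order_trans)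
  ultimately obtain g where "g \<in> S" "\<forall>y\<in>S. y \<le> g"
    using int_set_has_greatest by blast
  then show ?thesis unfolding S_def by blast
qed

lemma chamber_label_shift:
  assumes n: "n > 0"
    and L: "\<And>q t. L (q + int n * t) = L q + int n * t" "surj L"
    and \<phi>: "periodic n \<phi>"
    and L': "\<And>q. L' (q + t) = L q + int n * \<phi> (L q)"
  shows "chamber_label n L' (p + t) x = chamber_label n L p x + \<phi> x"
proof -
  define T where "T y = y + int n * \<phi> y" for y
  have T_class: "T y = y + int n * \<phi> x" if "y mod int n = x mod int n" for y
    using periodic_cong[OF \<phi> that] unfolding T_def by simp
  have T_mod: "T y mod int n = y mod int n" for y
    unfolding T_def by simp
  from greatest_in_residue_class_exists[OF n L, of p x]
  obtain g where g: "g \<in> L ` {..p}" "g mod int n = x mod int n"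
    and g_max: "\<forall>y\<in>L ` {..p}. y mod int n = x mod int n \<longrightarrow> y \<le> g"
    by blast
  have "y \<in> (\<lambda>q. q + t) ` {..p}" if "y \<le> p + t" for y
    using that by (intro image_eqI[of _ _ "y - t"]) auto
  then have "{..p + t} = (\<lambda>q. q + t) ` {..p}" by auto
  then have img: "L' ` {..p + t} = T ` L ` {..p}"
    by (simp add: image_image L' T_def)
  have "(GREATEST b. b \<in> L ` {..p} \<and> b mod int n = x mod int n) = g"
    by (rule Greatest_equality) (use g g_max in auto)
  moreover have "(GREATEST b. b \<in> L' ` {..p + t} \<and> b mod int n = x mod int n) = g + int n * \<phi> x"
  proof (rule Greatest_equality)
    show "g + int n * \<phi> x \<in> L' ` {..p + t} \<and> (g + int n * \<phi> x) mod int n = x mod int n"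
      unfolding img using g T_class[OF g(2)] by (metis image_eqI mod_mult_self2)
  next
    fix y assume y: "y \<in> L' ` {..p + t} \<and> y mod int n = x mod int n"
    then obtain z where z: "z \<in> L ` {..p}" "y = T z"
      unfolding img by blast
    moreover have "z mod int n = x mod int n"
      using y T_mod[of z] unfolding z(2) by simp
    ultimately show "y \<le> g + int n * \<phi> x" using g_max T_class by fastforce
  qed
  moreover have "real_of_int (g + int n * \<phi> x) / real n = real_of_int g / real n + \<phi> x"
    using n by (simp add: field_simps)
  ultimately show ?thesis
    unfolding chamber_label_def by simp
qed

lemma traj_displacement:
  assumes n: "n \<ge> 2" and glide: "glide n w k"
  shows "\<exists>t0. \<forall>x. traj n w x = displacement n w k x + t0"
proof -
  define p0 where "p0 = aff n (rev w) 1"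
  have p0: "aff n w p0 = 1" unfolding p0_def using aff_aff_rev[OF n] .
  have start: "(THE p. aff n w p = 1) = p0"
    using p0 aff_rev_aff[OF n, of w] unfolding p0_def by (intro the_equality) metis+
  obtain t0 where t0: "p0 + int k - 1 = int n * t0"
    using glide_aff_mod[OF glide, of p0] p0 by (metis dvdE mod_eq_dvd_iff)
  define \<phi> where "\<phi> q = displacement n w k q + t0" for q
  have "periodic n \<phi>" using periodic_displacement unfolding periodic_def \<phi>_def by simp
  moreover have "aff n w (q + (p0 - 1)) = id q + int n * \<phi> (id q)" for q
  proof -
    have e: "q + (p0 - 1) = (q + int n * t0) - int k" using t0 by simp
    show ?thesis unfolding e
      using aff_glide_displacement[OF glide, of "q + int n * t0"]
        periodicD[OF periodic_displacement, of n w k q t0]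
      unfolding \<phi>_def by (simp add: algebra_simps)
  qed
  ultimately have "chamber_label n (aff n w) (1 + (p0 - 1)) x = chamber_label n id 1 x + \<phi> x" for x
    using n by (intro chamber_label_shift) auto
  then show ?thesis unfolding traj_def start \<phi>_def by auto
qed

section \<open>The diagram \<open>\<Gamma>\<close> and its time evolution\<close>

lemma line_lab_0: "line_lab n D 0 = snd D"
  unfolding line_lab_def seg_def by simp

lemma line_lab_succ:
  assumes "n \<ge> 2"
  shows "line_lab n D (c + 1) q = line_lab n D c (aff n (fst D c) q)"
proof (cases "c \<ge> 0")
  case True
  then have "seg (fst D) 0 (c + 1) = seg (fst D) 0 c @ fst D c"
    unfolding seg_def by (simp add: upto_rec2)
  then show ?thesis unfolding line_lab_def using True by (simp add: aff_append)
next
  case False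
  then have seg: "seg (fst D) c 0 = fst D c @ seg (fst D) (c + 1) 0"
    unfolding seg_def by (simp add: upto_rec1)
  have "line_lab n D (c + 1) = snd D \<circ> aff n (rev (seg (fst D) (c + 1) 0))"
    using False by (cases "c + 1 < 0") (auto simp: line_lab_def seg_def)
  then show ?thesis using False
    by (simp add: line_lab_def seg aff_append aff_rev_aff[OF assms])
qed

lemma line_lab_rotated_blocks:
  assumes n: "n \<ge> 2" and glide: "glide n u k"
    and blocks: "\<And>c. fst D c = rot n (e - c * int k) u"
  shows "line_lab n D c (q + e - c * int k) = snd D (q + int n * c * displacement n u k q + e)"
proof (induction c arbitrary: q rule: int_induct[where k = 0])
  case base
  show ?case by (simp add: line_lab_0)
next
  case (step1 c)
  let ?\<delta> = "displacement n u k"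
  have "line_lab n D (c + 1) (q + e - (c + 1) * int k)
      = line_lab n D c (aff n u (q - int k) + e - c * int k)"
    unfolding line_lab_succ[OF n] blocks aff_rot by (simp add: algebra_simps)
  also have "\<dots> = snd D (q + int n * (c + 1) * ?\<delta> q + e)"
    unfolding aff_glide_displacement[OF glide] step1.IH
      periodicD[OF periodic_displacement] by (simp add: algebra_simps)
  finally show ?case .
next
  case (step2 c)
  let ?\<delta> = "displacement n u k"
  define q' where "q' = aff n (rev u) q + int k"
  have q: "q = q' + int n * ?\<delta> q'"
    unfolding q'_def aff_glide_displacement[OF glide, symmetric] by (simp add: aff_aff_rev[OF n])
  have "line_lab n D (c - 1) (q + e - (c - 1) * int k)
      = line_lab n D (c - 1 + 1) (q' + e - c * int k)"
    unfolding line_lab_succ[OF n] blocks aff_rot q'_def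
    by (simp add: aff_aff_rev[OF n] algebra_simps)
  also have "\<dots> = snd D (q' + int n * c * ?\<delta> q' + e)"
    using step2.IH[of q'] by simp
  also have "\<dots> = snd D (q + int n * (c - 1) * ?\<delta> q + e)"
    using q periodicD[OF periodic_displacement, of n u k q' "?\<delta> q'"]
    by (simp add: algebra_simps)
  finally show ?case .
qed

lemma fst_evolve_Gamma:
  "fst (evolve n v k2 s (Gamma n u k1)) c = rot n (int s * int k2 - c * int k1) u"
  by (induction s) (simp_all add: Gamma_def time_step_def rot_rot algebra_simps)

lemma snd_evolve_Gamma:
  assumes n: "n \<ge> 2" and glide: "glide n v k2"
  shows "snd (evolve n v k2 s (Gamma n u k1)) (z + int s * int k2)
           = z - int n * int s * displacement n (rot n (- int k2) v) k2 z"
proof (induction s arbitrary: z)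
  case 0
  show ?case by (simp add: Gamma_def)
next
  case (Suc s)
  let ?\<delta> = "displacement n (rot n (- int k2) v) k2"
  define z' where "z' = z - int n * ?\<delta> z"
  have \<delta>z': "?\<delta> z' = ?\<delta> z"
    unfolding z'_def using periodicD[OF periodic_displacement, of n _ k2 z "- ?\<delta> z"] by simp
  have "aff n v z' = z + int k2"
    using aff_glide_displacement_rot[OF glide, of z'] \<delta>z' by (simp add: z'_def)
  then have "aff n (rot n (int s * int k2) v) (z' + int s * int k2) = z + int (Suc s) * int k2"
    by (simp add: aff_rot algebra_simps)
  then have "aff n (rev (rot n (int s * int k2) v)) (z + int (Suc s) * int k2) = z' + int s * int k2"
    by (metis aff_rev_aff[OF n])
  then have "snd (evolve n v k2 (Suc s) (Gamma n u k1)) (z + int (Suc s) * int k2)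
      = snd (evolve n v k2 s (Gamma n u k1)) (z' + int s * int k2)"
    by (simp add: time_step_def)
  also have "\<dots> = z' - int n * int s * ?\<delta> z'"
    by (rule Suc.IH)
  finally show ?case
    unfolding \<delta>z' by (simp add: z'_def algebra_simps)
qed

lemma slot_lab_evolve_Gamma:
  assumes n: "n \<ge> 2" and glide_u: "glide n u k1" and glide_v: "glide n v k2"
    and z: "z = aff n (take j u) (q - (int s * int k2 - c * int k1))"
    and y: "y = z + int n * c * displacement n u k1 z"
  shows "slot_lab n (evolve n v k2 s (Gamma n u k1)) c j q
           = y - int n * int s * displacement n (rot n (- int k2) v) k2 y"
proof -
  let ?D = "evolve n v k2 s (Gamma n u k1)"
  have "take j (fst ?D c) = rot n (int s * int k2 - c * int k1) (take j u)"
    unfolding fst_evolve_Gamma rot_def by (simp add: take_map)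
  then have "slot_lab n ?D c j q = line_lab n ?D c (z + int s * int k2 - c * int k1)"
    unfolding slot_lab_def z by (simp add: aff_rot add_diff_eq)
  also have "\<dots> = snd ?D (y + int s * int k2)"
    unfolding line_lab_rotated_blocks[OF n glide_u fst_evolve_Gamma] y by simp
  also have "\<dots> = y - int n * int s * displacement n (rot n (- int k2) v) k2 y"
    by (rule snd_evolve_Gamma[OF n glide_v])
  finally show ?thesis .
qed

lemma slot_lab_evolve_Gamma_shift:
  fixes c i :: int and j :: nat
  assumes n: "n \<ge> 2" and glide_u: "glide n u k1" and glide_v: "glide n v k2"
  defines "L \<equiv> slot_lab n (Gamma n u k1) c j"
  shows "slot_lab n (evolve n v k2 m (Gamma n u k1)) (c + i) j (q + (int m * int k2 - i * int k1))
           = L q + int n * (i * displacement n u k1 (L q)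
                            - int m * displacement n (rot n (- int k2) v) k2 (L q))"
proof -
  let ?\<delta>u = "displacement n u k1" and ?\<delta>v = "displacement n (rot n (- int k2) v) k2"
  define z where "z = aff n (take j u) (q + c * int k1)"
  have "L q = slot_lab n (evolve n v k2 0 (Gamma n u k1)) c j q"
    unfolding L_def by simp
  also have "\<dots> = (z + int n * c * ?\<delta>u z) - int n * int 0 * ?\<delta>v (z + int n * c * ?\<delta>u z)"
    by (rule slot_lab_evolve_Gamma[OF n glide_u glide_v]) (simp_all add: z_def)
  finally have Lq: "L q = z + int n * c * ?\<delta>u z" by simp
  have \<delta>u: "?\<delta>u (L q) = ?\<delta>u z"
    unfolding Lq using periodicD[OF periodic_displacement, of n u k1 z "c * ?\<delta>u z"]
    by (simp add: mult.assoc)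
  have "slot_lab n (evolve n v k2 m (Gamma n u k1)) (c + i) j (q + (int m * int k2 - i * int k1))
      = (z + int n * (c + i) * ?\<delta>u z)
        - int n * int m * ?\<delta>v (z + int n * (c + i) * ?\<delta>u z)"
    by (rule slot_lab_evolve_Gamma[OF n glide_u glide_v]) (simp_all add: z_def algebra_simps)
  also have "z + int n * (c + i) * ?\<delta>u z = L q + int n * (i * ?\<delta>u z)"
    unfolding Lq by (simp add: algebra_simps)
  finally show ?thesis
    unfolding \<delta>u periodicD[OF periodic_displacement] by (simp add: algebra_simps)
qed

lemma slot_lab_Gamma_eq_aff: "\<exists>w. slot_lab n (Gamma n u k1) c j = aff n w"
  unfolding slot_lab_def line_lab_def Gamma_def by (auto simp: aff_append[symmetric])

lemma cyl_iso_evolve_Gamma: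
  "cyl_iso n (Gamma n u k1) (evolve n v k2 m (Gamma n u k1)) i (int m * int k2 - i * int k1)"
proof -
  have "(x + (int m * int k2 - (c + i) * int k1)) mod int n
      = ((x + - c * int k1) mod int n + (int m * int k2 - i * int k1)) mod int n" for x c
    unfolding mod_add_left_eq by (simp add: algebra_simps)
  then show ?thesis
    unfolding cyl_iso_def fst_evolve_Gamma by (simp add: Gamma_def rot_def)
qed

lemma chamber_label_evolve_Gamma:
  assumes n: "n \<ge> 2" and glide_u: "glide n u k1" and glide_v: "glide n v k2"
  shows "chamber_label n (slot_lab n (evolve n v k2 m (Gamma n u k1)) (c + i) j)
           (p + (int m * int k2 - i * int k1)) x
       = chamber_label n (slot_lab n (Gamma n u k1) c j) p x
           + i * displacement n u k1 x - int m * displacement n (rot n (- int k2) v) k2 x"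
proof -
  let ?\<delta>u = "displacement n u k1" and ?\<delta>v = "displacement n (rot n (- int k2) v) k2"
  define \<phi> where "\<phi> y = i * ?\<delta>u y - int m * ?\<delta>v y" for y
  obtain w where w: "slot_lab n (Gamma n u k1) c j = aff n w"
    using slot_lab_Gamma_eq_aff by blast
  have "periodic n \<phi>"
    unfolding periodic_def \<phi>_def by (simp add: periodicD[OF periodic_displacement])
  moreover have "slot_lab n (evolve n v k2 m (Gamma n u k1)) (c + i) j (q + (int m * int k2 - i * int k1))
      = aff n w q + int n * \<phi> (aff n w q)" for q
    using slot_lab_evolve_Gamma_shift[OF n glide_u glide_v, where c = c and i = i and j = j]
    unfolding \<phi>_def w by simp
  ultimately have "chamber_label n (slot_lab n (evolve n v k2 m (Gamma n u k1)) (c + i) j)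
      (p + (int m * int k2 - i * int k1)) x = chamber_label n (aff n w) p x + \<phi> x"
    using n by (intro chamber_label_shift) (auto simp: aff_add_mult surj_aff)
  then show ?thesis
    unfolding w \<phi>_def by simp
qed

theorem proposition5p4:
  fixes n k1 k2 m :: nat and u v :: "int list" and i :: int
  assumes "n \<ge> 3"
    and "reduced n u" and "glide n u k1"
    and "reduced n v" and "glide n v k2"
    and "reduced n (v @ u)"
  defines "\<Gamma> \<equiv> Gamma n u k1"
    and "\<Gamma>' \<equiv> evolve n v k2 m (Gamma n u k1)"
    and "r \<equiv> int m * int k2 - i * int k1"
  shows "cyl_iso n \<Gamma> \<Gamma>' i r \<and>
    (\<forall>c j p. j \<le> length u \<longrightarrow>
       modeq n (chamber_label n (slot_lab n \<Gamma>' (c + i) j) (p + r))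
               (\<lambda>x. chamber_label n (slot_lab n \<Gamma> c j) p x + i * traj n u x
                    - int m * traj n (rot n (- int k2) v) x))"
proof -
  have n: "n \<ge> 2" using assms(1) by simp
  obtain tu where tu: "\<And>x. traj n u x = displacement n u k1 x + tu"
    using traj_displacement[OF n assms(3)] by blast
  obtain tv where tv: "\<And>x. traj n (rot n (- int k2) v) x
                            = displacement n (rot n (- int k2) v) k2 x + tv"
    using traj_displacement[OF n glide_rot[OF assms(5)]] by blast
  have "modeq n (chamber_label n (slot_lab n \<Gamma>' (c + i) j) (p + r))
          (\<lambda>x. chamber_label n (slot_lab n \<Gamma> c j) p x + i * traj n u x
               - int m * traj n (rot n (- int k2) v) x)" for c j p
    unfolding modeq_def \<Gamma>_def \<Gamma>'_def r_def chamber_label_evolve_Gamma[OF n assms(3,5)] tu tv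
    by (intro exI[of _ "int m * tv - i * tu"]) (simp add: algebra_simps)
  moreover have "cyl_iso n \<Gamma> \<Gamma>' i r"
    unfolding \<Gamma>_def \<Gamma>'_def r_def by (rule cyl_iso_evolve_Gamma)
  ultimately show ?thesis by blast
qed

end
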